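(* Let $L$ be a $\kappa$-frame. The map $a\mapsto\partial_{(\downarrow a)^{**}}$ is a $\kappa$-frame homomorphism from $L$ to the frame ${\uparrow}\mathfrak{D}_L=\{C\in\mathbb{C}L\mid C\supseteq\mathfrak{D}_L\}$, and its kernel $\{(a,b)\mid\partial_{(\downarrow a)^{**}}=\partial_{(\downarrow b)^{**}}\}$ equals $\mathfrak{D}_L$. In particular this map is monotone, and the set of clear congruences of the form $\partial_{(\downarrow a)^{**}}$ ($a\in L$) is closed under finite meets and nonempty joins of fewer than $\kappa$ elements in $\mathbb{C}L$.
   Context: $\kappa$ is a fixed regular cardinal; a $\kappa$-frame is a bounded distributive lattice having joins of all subsets of cardinality $<\kappa$ and satisfying the frame distributive law for such joins; homomorphisms preserve finite meets and joins of $<\kappa$ elements. A $\kappa$-ideal is a downset in which every subset of cardinality $<\kappa$ has an upper bound; $\mathfrak{H}_\kappa L$ is the frame of $\kappa$-ideals under inclusion, $\downarrow a=\{x\mid x\le a\}$, and $J^*$ is the pseudocomplement in $\mathfrak{H}_\kappa L$. A congruence is an equivalence relation that is a sub-$\kappa$-frame of $L\times L$; $\mathbb{C}L$ is the frame of congruences under inclusion, and ${\uparrow}\mathfrak{D}_L$ carries the meets and joins of $\mathbb{C}L$, with bottom $\mathfrak{D}_L$. $\mathfrak{D}_L=\{(b,c)\mid\forall x\in L:\ b\wedge x=0\iff c\wedge x=0\}$; for a $\kappa$-ideal $I$, $\partial_I=\{(b,c)\mid\forall x\in L:\ b\wedge x\in I\iff c\wedge x\in I\}$, and congruences of this form are called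 clear. *)

theory Defs
  imports Main
begin

unbundle cardinal_syntax

text \<open>The regular cardinal kappa is represented by a cardinal order relation
  k (on an arbitrary type 'k) with Cinfinite k and regularCard k.
  "S has cardinality < kappa" is |S| <o k.\<close>

definition is_lub :: "'a::order set \<Rightarrow> 'a \<Rightarrow> bool" where
  "is_lub S x \<longleftrightarrow> (\<forall>s\<in>S. s \<le> x) \<and> (\<forall>y. (\<forall>s\<in>S. s \<le> y) \<longrightarrow> x \<le> y)"

definition ksup :: "'a::order set \<Rightarrow> 'a" where
  "ksup S = (THE x. is_lub S x)"

definition kappa_frame :: "'k rel \<Rightarrow> ('a::{distrib_lattice,bounded_lattice}) itself \<Rightarrow> bool" where
  "kappa_frame k _ \<longleftrightarrow>
     (\<forall>S::'a set. |S| <o k \<longrightarrow> (\<exists>x. is_lub S x)) \<and>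
     (\<forall>(a::'a) S. |S| <o k \<longrightarrow> inf a (ksup S) = ksup ((\<lambda>s. inf a s) ` S))"

definition kideal :: "'k rel \<Rightarrow> ('a::{distrib_lattice,bounded_lattice}) set \<Rightarrow> bool" where
  "kideal k I \<longleftrightarrow> (\<forall>x y. y \<in> I \<longrightarrow> x \<le> y \<longrightarrow> x \<in> I) \<and>
     (\<forall>S. S \<subseteq> I \<longrightarrow> |S| <o k \<longrightarrow> (\<exists>u\<in>I. \<forall>s\<in>S. s \<le> u))"

definition kpc :: "'k rel \<Rightarrow> ('a::{distrib_lattice,bounded_lattice}) set \<Rightarrow> 'a set" where
  "kpc k J = (THE K. kideal k K \<and> K \<inter> J = {bot} \<and>
      (\<forall>K'. kideal k K' \<and> K' \<inter> J = {bot} \<longrightarrow> K' \<subseteq> K))"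

definition down :: "'a::order \<Rightarrow> 'a set" where
  "down a = {x. x \<le> a}"

definition kcong :: "'k rel \<Rightarrow> ('a::{distrib_lattice,bounded_lattice}) rel \<Rightarrow> bool" where
  "kcong k C \<longleftrightarrow> equiv UNIV C \<and> (top, top) \<in> C \<and>
     (\<forall>a b c d. (a, b) \<in> C \<longrightarrow> (c, d) \<in> C \<longrightarrow> (inf a c, inf b d) \<in> C) \<and>
     (\<forall>S. S \<subseteq> C \<longrightarrow> |S| <o k \<longrightarrow> (ksup (fst ` S), ksup (snd ` S)) \<in> C)"

definition cjoin :: "'k rel \<Rightarrow> ('a::{distrib_lattice,bounded_lattice}) rel set \<Rightarrow> 'a rel" where
  "cjoin k F = \<Inter>{C. kcong k C \<and> \<Union>F \<subseteq> C}"

definition DL :: "('a::{distrib_lattice,bounded_lattice}) rel" where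
  "DL = {(b, c). \<forall>x. inf b x = bot \<longleftrightarrow> inf c x = bot}"

definition partial :: "('a::{distrib_lattice,bounded_lattice}) set \<Rightarrow> 'a rel" where
  "partial I = {(b, c). \<forall>x. inf b x \<in> I \<longleftrightarrow> inf c x \<in> I}"

definition upjoin :: "'k rel \<Rightarrow> ('a::{distrib_lattice,bounded_lattice}) rel set \<Rightarrow> 'a rel" where
  "upjoin k F = cjoin k (insert DL F)"

definition dmap :: "'k rel \<Rightarrow> ('a::{distrib_lattice,bounded_lattice}) \<Rightarrow> 'a rel" where
  "dmap k a = partial (kpc k (kpc k (down a)))"

end

theory Submission
  imports Defs
begin

unbundle cardinal_syntax

text \<open>The pseudocomplement of a \<kappa>-ideal \<open>J\<close> is its annihilator
  \<open>J\<^sup>\<perp> = {x. \<forall>j\<in>J. x \<sqinter> j = 0}\<close>, so \<open>(\<down>a)\<^sup>*\<^sup>* = {y. \<forall>z. z \<sqinter> a = 0 \<longrightarrow> y \<sqinter> z = 0}\<close>.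
  If \<open>0 \<in> K \<subseteq> T\<^sup>\<perp>\<close>, membership in \<open>T\<^sup>\<perp>\<close> is decided by \<open>K\<close>-membership of meets,
  whence \<open>\<partial>\<^sub>K \<subseteq> \<partial>\<^bsub>T\<^sup>\<perp>\<^esub>\<close>; with \<open>K = {0}\<close> and \<open>K = (\<down>a)\<^sup>*\<^sup>* \<inter> (\<down>b)\<^sup>*\<^sup>*\<close> this gives
  \<open>D\<^sub>L \<subseteq> \<partial>\<^bsub>(\<down>a)\<^sup>*\<^sup>*\<^esub>\<close> and preservation of meets.  For \<open>s = \<Squnion>S\<close>, a congruence containing
  \<open>D\<^sub>L\<close> and every \<open>\<partial>\<^bsub>(\<down>a)\<^sup>*\<^sup>*\<^esub>\<close> with \<open>a \<in> S\<close> identifies each such \<open>a\<close>, hence \<open>s\<close>, with \<open>0\<close>,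
  hence every \<open>b\<close> with \<open>b \<squnion> s\<close>; and \<open>b \<equiv> c\<close> modulo \<open>\<partial>\<^bsub>(\<down>s)\<^sup>*\<^sup>*\<^esub>\<close> forces
  \<open>b \<squnion> s \<equiv> c \<squnion> s\<close> modulo \<open>D\<^sub>L\<close>.\<close>

lemma finite_ordLess_Cinfinite: "Cinfinite k \<Longrightarrow> finite A \<Longrightarrow> |A| <o k"
  using Cfinite_ordLess_Cinfinite[of "|A|" k]
  by (simp add: cfinite_def Field_card_of card_of_Card_order card_of_card_order_on)

lemma card_of_image_ordLess: "|S| <o k \<Longrightarrow> |f ` S| <o k"
  using card_of_image ordLeq_ordLess_trans by blast

lemma is_lub_unique: "is_lub S x \<Longrightarrow> is_lub S y \<Longrightarrow> x = y"
  unfolding is_lub_def by (meson order_antisym)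

lemma ksup_eq: "is_lub S x \<Longrightarrow> ksup S = x"
  unfolding ksup_def using is_lub_unique by blast

lemma ksup_subset_bot: "S \<subseteq> {bot::'a::bounded_lattice} \<Longrightarrow> ksup S = bot"
  by (rule ksup_eq) (auto simp: is_lub_def)

lemma ksup_doubleton: "ksup {a, b::'a::lattice} = sup a b"
  by (rule ksup_eq) (auto simp: is_lub_def)

subsection \<open>Annihilators and the ideals \<open>(\<down>a)\<^sup>*\<^sup>*\<close>\<close>

definition annihilator :: "'a::bounded_lattice set \<Rightarrow> 'a set" where
  "annihilator J = {x. \<forall>j\<in>J. inf x j = bot}"

definition down_pp :: "'a::bounded_lattice \<Rightarrow> 'a set" where
  "down_pp a = annihilator (annihilator (down a))"

lemma annihilator_downward: "y \<in> annihilator J \<Longrightarrow> x \<le> y \<Longrightarrow> x \<in> annihilator J"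
proof (clarsimp simp: annihilator_def)
  fix j assume "\<forall>j\<in>J. inf y j = bot" "x \<le> y" "j \<in> J"
  moreover have "inf x j \<le> inf y j" using \<open>x \<le> y\<close> by (rule inf_mono) simp
  ultimately show "inf x j = bot" by (simp add: bot_unique)
qed

lemma kideal_downward: "kideal k I \<Longrightarrow> y \<in> I \<Longrightarrow> x \<le> y \<Longrightarrow> x \<in> I"
  by (simp add: kideal_def)

lemma kideal_bot:
  assumes "Cinfinite k" "kideal k I"
  shows "bot \<in> I"
proof -
  have "\<forall>S. S \<subseteq> I \<longrightarrow> |S| <o k \<longrightarrow> (\<exists>u\<in>I. \<forall>s\<in>S. s \<le> u)"
    using assms(2) unfolding kideal_def by (rule conjunct2)
  from this[rule_format, OF empty_subsetI finite_ordLess_Cinfinite[OF assms(1) finite.emptyI]]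
  obtain u where "u \<in> I" by blast
  then show ?thesis using kideal_downward[OF assms(2)] by simp
qed

lemma kideal_disjoint_subset_annihilator:
  assumes "kideal k K" "K \<inter> J = {bot}" and downward: "\<And>x y. y \<in> J \<Longrightarrow> x \<le> y \<Longrightarrow> x \<in> J"
  shows "K \<subseteq> annihilator J"
proof (clarsimp simp: annihilator_def)
  fix x j assume "x \<in> K" "j \<in> J"
  then have "inf x j \<in> K \<inter> J"
    using kideal_downward[OF assms(1) _ inf_le1] downward[OF _ inf_le2] by blast
  then show "inf x j = bot" using assms(2) by simp
qed

lemma annihilator_down: "annihilator (down a) = {z. inf z a = bot}"
  unfolding annihilator_def down_def by auto (metis inf_mono order_refl le_bot)

lemma mem_down_pp: "y \<in> down_pp a \<longleftrightarrow> (\<forall>z. inf z a = bot \<longrightarrow> inf y z = bot)"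
  unfolding down_pp_def annihilator_down by (simp add: annihilator_def)

lemma bot_mem_down_pp: "bot \<in> down_pp a"
  by (simp add: mem_down_pp)

lemma self_mem_down_pp: "(a::'a::bounded_lattice) \<in> down_pp a"
  by (simp add: mem_down_pp inf_commute)

lemma down_pp_downward: "y \<in> down_pp a \<Longrightarrow> x \<le> y \<Longrightarrow> x \<in> down_pp a"
  unfolding down_pp_def by (rule annihilator_downward)

lemma down_pp_top: "down_pp (top::'a::bounded_lattice) = UNIV"
  by (simp add: mem_down_pp set_eq_iff)

lemma down_pp_mono: "a \<le> b \<Longrightarrow> down_pp a \<subseteq> down_pp b"
  unfolding mem_down_pp subset_iff by (metis inf_mono order_refl le_bot)

lemma down_pp_inf: "down_pp (inf a b) = down_pp a \<inter> down_pp (b::'a::bounded_lattice)"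
proof
  show "down_pp (inf a b) \<subseteq> down_pp a \<inter> down_pp b"
    using down_pp_mono[of "inf a b" a] down_pp_mono[of "inf a b" b] by auto
  show "down_pp a \<inter> down_pp b \<subseteq> down_pp (inf a b)"
  proof (clarsimp simp: mem_down_pp)
    fix y z
    assume a: "\<forall>z. inf z a = bot \<longrightarrow> inf y z = bot"
      and b: "\<forall>z. inf z b = bot \<longrightarrow> inf y z = bot"
      and "inf z (inf a b) = bot"
    then have "inf (inf z b) a = bot" by (simp add: ac_simps)
    then have "inf y (inf z b) = bot" using a by blast
    then have "inf (inf y z) b = bot" by (simp add: ac_simps)
    then have "inf y (inf y z) = bot" using b by blast
    then show "inf y z = bot" by (simp flip: inf_assoc)
  qed
qed

lemma DL_iff_mem_down_pp: "(a, b) \<in> DL \<longleftrightarrow> a \<in> down_pp b \<and> b \<in> down_pp a"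
  unfolding DL_def mem_down_pp by (auto simp: inf_commute)

lemma down_pp_eq_iff_DL: "down_pp a = down_pp b \<longleftrightarrow> (a, b) \<in> DL"
proof
  assume "down_pp a = down_pp b"
  then show "(a, b) \<in> DL" unfolding DL_iff_mem_down_pp using self_mem_down_pp by metis
qed (auto simp: DL_def mem_down_pp set_eq_iff inf_commute)

lemma DL_eq_partial_bot: "DL = partial {bot}"
  unfolding DL_def partial_def by auto

lemma partial_Int_subset: "partial I \<inter> partial J \<subseteq> partial (I \<inter> J)"
  unfolding partial_def by auto

lemma partial_subset_partial_annihilator:
  assumes "bot \<in> K" "K \<subseteq> annihilator T"
  shows "partial K \<subseteq> partial (annihilator T)"
proof -
  have ann: "y \<in> annihilator T \<longleftrightarrow> (\<forall>z\<in>T. inf y z \<in> K)" for y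
  proof
    assume "\<forall>z\<in>T. inf y z \<in> K"
    then have "\<forall>z\<in>T. inf (inf y z) z = bot" using assms(2) unfolding annihilator_def by blast
    then show "y \<in> annihilator T" by (simp add: annihilator_def inf_assoc)
  qed (use assms(1) in \<open>auto simp: annihilator_def\<close>)
  show ?thesis
  proof (clarsimp simp: partial_def)
    fix b c x assume "\<forall>x. inf b x \<in> K \<longleftrightarrow> inf c x \<in> K"
    then show "inf b x \<in> annihilator T \<longleftrightarrow> inf c x \<in> annihilator T"
      unfolding ann by (simp add: inf_assoc)
  qed
qed

lemma partial_subset_partial_down_pp:
  "bot \<in> K \<Longrightarrow> K \<subseteq> down_pp a \<Longrightarrow> partial K \<subseteq> partial (down_pp a)"
  unfolding down_pp_def by (rule partial_subset_partial_annihilator)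

lemma bot_partial_down_pp_self: "(bot, a) \<in> partial (down_pp a)"
  unfolding partial_def
  using bot_mem_down_pp down_pp_downward[OF self_mem_down_pp inf_le1] by auto

lemma partial_down_pp_sup_DL:
  fixes b c s :: "'a::{distrib_lattice,bounded_lattice}"
  assumes "(b, c) \<in> partial (down_pp s)"
  shows "(sup b s, sup c s) \<in> DL"
proof -
  have on_ann: "inf y x \<in> down_pp s \<longleftrightarrow> inf y x = bot" if "inf s x = bot" for y x
    using that bot_mem_down_pp by (auto simp: mem_down_pp inf_commute inf_assoc)
  have "inf (sup b s) x = bot \<longleftrightarrow> inf (sup c s) x = bot" for x
  proof (cases "inf s x = bot")
    case True
    then show ?thesis using assms on_ann[OF True, of b] on_ann[OF True, of c]
      by (simp add: partial_def inf_sup_distrib2)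
  qed (simp add: inf_sup_distrib2)
  then show ?thesis by (simp add: DL_def)
qed

lemma kcong_equiv: "kcong k C \<Longrightarrow> equiv UNIV C"
  by (simp add: kcong_def)

lemma kcong_ksup: "kcong k C \<Longrightarrow> S \<subseteq> C \<Longrightarrow> |S| <o k \<Longrightarrow> (ksup (fst ` S), ksup (snd ` S)) \<in> C"
  by (simp add: kcong_def)

lemma kcong_sup:
  assumes "Cinfinite k" "kcong k C" "(a, b) \<in> C" "(c, d) \<in> C"
  shows "(sup a c, sup b d) \<in> C"
  using kcong_ksup[OF assms(2), of "{(a, b), (c, d)}"] assms
  by (simp add: finite_ordLess_Cinfinite ksup_doubleton)

lemma kcong_bot_ksup:
  fixes C :: "'a::{distrib_lattice,bounded_lattice} rel"
  assumes "kcong k C" "|S| <o k" "\<And>a. a \<in> S \<Longrightarrow> (bot, a) \<in> C"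
  shows "(bot, ksup S) \<in> C"
proof -
  have "(ksup (fst ` Pair (bot::'a) ` S), ksup (snd ` Pair (bot::'a) ` S)) \<in> C"
    by (rule kcong_ksup[OF assms(1)]) (use assms in \<open>auto intro: card_of_image_ordLess\<close>)
  moreover have "ksup (fst ` Pair (bot::'a) ` S) = bot" by (rule ksup_subset_bot) auto
  ultimately show ?thesis by (simp add: image_image)
qed

lemma cjoin_least: "kcong k C \<Longrightarrow> \<Union>F \<subseteq> C \<Longrightarrow> cjoin k F \<subseteq> C"
  unfolding cjoin_def by blast

lemma cjoin_insert_absorb:
  assumes "X \<in> F" "D \<subseteq> X"
  shows "cjoin k (insert D F) = cjoin k F"
proof -
  have "\<Union>(insert D F) = \<Union>F" using assms by blast
  then show ?thesis by (simp add: cjoin_def)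
qed

subsection \<open>The homomorphism \<open>a \<mapsto> \<partial>\<^bsub>(\<down>a)\<^sup>*\<^sup>*\<^esub>\<close>\<close>

locale kappa_frame_ctx =
  fixes k :: "'k rel" and type :: "'a::{distrib_lattice,bounded_lattice} itself"
  assumes Cinfinite: "Cinfinite k" and kappa_frame: "kappa_frame k TYPE('a)"
begin

lemma is_lub_ksup: "|S| <o k \<Longrightarrow> is_lub (S::'a set) (ksup S)"
  using kappa_frame unfolding kappa_frame_def using ksup_eq by metis

lemma ksup_upper: "|S| <o k \<Longrightarrow> s \<in> S \<Longrightarrow> s \<le> ksup (S::'a set)"
  using is_lub_ksup unfolding is_lub_def by blast

lemma ksup_least: "|S| <o k \<Longrightarrow> (\<And>s. s \<in> S \<Longrightarrow> s \<le> y) \<Longrightarrow> ksup (S::'a set) \<le> y"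
  using is_lub_ksup unfolding is_lub_def by blast

lemma inf_ksup_distrib: "|S| <o k \<Longrightarrow> inf x (ksup S) = ksup (inf (x::'a) ` S)"
  using kappa_frame unfolding kappa_frame_def by blast

lemma kideal_ksup_iff:
  assumes "kideal k (I::'a set)" "|S| <o k"
  shows "ksup S \<in> I \<longleftrightarrow> S \<subseteq> I"
proof
  assume "S \<subseteq> I"
  then obtain u where "u \<in> I" "\<forall>s\<in>S. s \<le> u" using assms unfolding kideal_def by blast
  then show "ksup S \<in> I" using assms ksup_least[of S u] unfolding kideal_def by blast
next
  assume "ksup S \<in> I"
  then show "S \<subseteq> I" using assms ksup_upper[OF assms(2)] unfolding kideal_def by blast
qed

lemma kideal_annihilator: "kideal k (annihilator (J::'a set))"
  unfolding kideal_def
proof (intro conjI allI impI)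
  show "y \<in> annihilator J \<Longrightarrow> x \<le> y \<Longrightarrow> x \<in> annihilator J" for x y
    by (rule annihilator_downward)
next
  fix S assume S: "S \<subseteq> annihilator J" "|S| <o k"
  have "inf (ksup S) j = bot" if "j \<in> J" for j
  proof -
    have "inf (ksup S) j = inf j (ksup S)" by (rule inf_commute)
    also have "\<dots> = ksup (inf j ` S)" by (rule inf_ksup_distrib[OF S(2)])
    also have "\<dots> = bot"
    proof (rule ksup_subset_bot, clarify)
      fix s assume "s \<in> S"
      then have "inf s j = bot" using S(1) that by (auto simp: annihilator_def)
      then show "inf j s = bot" by (simp add: inf_commute)
    qed
    finally show ?thesis .
  qed
  then have "ksup S \<in> annihilator J" by (simp add: annihilator_def)
  then show "\<exists>u\<in>annihilator J. \<forall>s\<in>S. s \<le> u"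
    using ksup_upper[OF S(2)] by blast
qed

lemma kpc_eq_annihilator:
  assumes "bot \<in> J" and downward: "\<And>x y. y \<in> J \<Longrightarrow> x \<le> y \<Longrightarrow> x \<in> J"
  shows "kpc k (J::'a set) = annihilator J"
  unfolding kpc_def
proof (rule the_equality)
  have disjoint: "annihilator J \<inter> J = {bot}"
    using \<open>bot \<in> J\<close> by (auto simp: annihilator_def)
  have maximal: "K \<subseteq> annihilator J" if "kideal k K" "K \<inter> J = {bot}" for K
    using that downward by (rule kideal_disjoint_subset_annihilator)
  show "kideal k (annihilator J) \<and> annihilator J \<inter> J = {bot} \<and>
      (\<forall>K. kideal k K \<and> K \<inter> J = {bot} \<longrightarrow> K \<subseteq> annihilator J)"
    using kideal_annihilator disjoint maximal by blast
  fix K assume K: "kideal k K \<and> K \<inter> J = {bot} \<and>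
      (\<forall>K'. kideal k K' \<and> K' \<inter> J = {bot} \<longrightarrow> K' \<subseteq> K)"
  then have "annihilator J \<subseteq> K" using kideal_annihilator disjoint by blast
  moreover have "K \<subseteq> annihilator J" using K maximal by blast
  ultimately show "K = annihilator J" by blast
qed

lemma dmap_eq: "dmap k (a::'a) = partial (down_pp a)"
proof -
  have "kpc k (down a) = annihilator (down a)"
    by (rule kpc_eq_annihilator) (auto simp: down_def)
  moreover have "kpc k (annihilator (down a)) = down_pp a"
    unfolding down_pp_def
    by (rule kpc_eq_annihilator[OF kideal_bot[OF Cinfinite kideal_annihilator] annihilator_downward])
  ultimately show ?thesis unfolding dmap_def by simp
qed

lemma kcong_partial:
  assumes I: "kideal k (I::'a set)"
  shows "kcong k (partial I)"
  unfolding kcong_def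
proof (intro conjI allI impI)
  show "equiv UNIV (partial I)"
    unfolding equiv_def refl_on_def sym_def trans_def partial_def by auto
  show "(top, top) \<in> partial I" by (simp add: partial_def)
next
  fix a b c d assume "(a, b) \<in> partial I" "(c, d) \<in> partial I"
  then have ab: "inf a x \<in> I \<longleftrightarrow> inf b x \<in> I" and cd: "inf c x \<in> I \<longleftrightarrow> inf d x \<in> I" for x
    unfolding partial_def by auto
  have "inf (inf a c) x \<in> I \<longleftrightarrow> inf (inf b d) x \<in> I" for x
  proof -
    have "inf (inf a c) x \<in> I \<longleftrightarrow> inf b (inf c x) \<in> I" using ab[of "inf c x"] by (simp add: inf_assoc)
    also have "\<dots> \<longleftrightarrow> inf d (inf b x) \<in> I" using cd[of "inf b x"] by (simp add: inf_left_commute)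
    finally show ?thesis by (simp add: ac_simps)
  qed
  then show "(inf a c, inf b d) \<in> partial I"
    unfolding partial_def by simp
next
  fix S assume S: "S \<subseteq> partial I" "|S| <o k"
  have ksup_mem: "inf (ksup (g ` S)) x \<in> I \<longleftrightarrow> (\<forall>p\<in>S. inf (g p) x \<in> I)" for g :: "'a \<times> 'a \<Rightarrow> 'a" and x
  proof -
    have "inf (ksup (g ` S)) x = inf x (ksup (g ` S))" by (rule inf_commute)
    also have "\<dots> = ksup (inf x ` g ` S)"
      by (rule inf_ksup_distrib[OF card_of_image_ordLess[OF S(2)]])
    also have "\<dots> \<in> I \<longleftrightarrow> inf x ` g ` S \<subseteq> I"
      by (rule kideal_ksup_iff[OF I card_of_image_ordLess[OF card_of_image_ordLess[OF S(2)]]])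
    finally show ?thesis by (auto simp: inf_commute)
  qed
  have "\<forall>p\<in>S. inf (fst p) x \<in> I \<longleftrightarrow> inf (snd p) x \<in> I" for x
    using S(1) by (auto simp: partial_def)
  then show "(ksup (fst ` S), ksup (snd ` S)) \<in> partial I"
    unfolding partial_def by (simp add: ksup_mem)
qed

lemma kcong_DL: "kcong k (DL::'a rel)"
  unfolding DL_eq_partial_bot
  by (rule kcong_partial) (auto simp: kideal_def bot_unique)

lemma kcong_dmap: "kcong k (dmap k (a::'a))"
  unfolding dmap_eq down_pp_def by (rule kcong_partial[OF kideal_annihilator])

lemma DL_subset_dmap: "DL \<subseteq> dmap k (a::'a)"
  unfolding dmap_eq DL_eq_partial_bot
  by (rule partial_subset_partial_down_pp) (simp_all add: bot_mem_down_pp)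

lemma dmap_mono: "mono (dmap k :: 'a \<Rightarrow> 'a rel)"
  unfolding dmap_eq
  by (intro monoI partial_subset_partial_down_pp) (simp_all add: bot_mem_down_pp down_pp_mono)

lemma dmap_inf: "dmap k (inf a b) = dmap k a \<inter> dmap k (b::'a)"
proof
  show "dmap k (inf a b) \<subseteq> dmap k a \<inter> dmap k b"
    using dmap_mono[THEN monoD, of "inf a b"] by auto
  have "dmap k a \<inter> dmap k b \<subseteq> partial (down_pp a \<inter> down_pp b)"
    unfolding dmap_eq by (rule partial_Int_subset)
  also have "\<dots> \<subseteq> dmap k (inf a b)"
    unfolding dmap_eq down_pp_inf[symmetric]
    by (rule partial_subset_partial_down_pp) (simp_all add: bot_mem_down_pp)
  finally show "dmap k a \<inter> dmap k b \<subseteq> dmap k (inf a b)" .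
qed

lemma dmap_top: "dmap k (top::'a) = UNIV"
  unfolding dmap_eq down_pp_top by (simp add: partial_def)

lemma dmap_kernel: "{(a, b). dmap k a = dmap k b} = (DL::'a rel)"
proof -
  have mem: "a \<in> down_pp b" if "dmap k a = dmap k b" for a b :: 'a
  proof -
    have "(bot, a) \<in> partial (down_pp b)"
      using that bot_partial_down_pp_self[of a] unfolding dmap_eq by simp
    then have "\<forall>x. bot \<in> down_pp b \<longleftrightarrow> inf a x \<in> down_pp b"
      unfolding partial_def by simp
    from this[rule_format, of top] show ?thesis by (simp add: bot_mem_down_pp)
  qed
  have "dmap k a = dmap k b \<longleftrightarrow> (a, b) \<in> DL" for a b :: 'a
  proof
    assume "dmap k a = dmap k b"
    then show "(a, b) \<in> DL" using mem[of a b] mem[of b a] by (simp add: DL_iff_mem_down_pp)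
  qed (simp add: dmap_eq flip: down_pp_eq_iff_DL)
  then show ?thesis by auto
qed

lemma dmap_ksup:
  assumes S: "|S::'a set| <o k"
  shows "dmap k (ksup S) = upjoin k (dmap k ` S)"
proof
  let ?s = "ksup S"
  show "upjoin k (dmap k ` S) \<subseteq> dmap k ?s"
    unfolding upjoin_def
    by (rule cjoin_least[OF kcong_dmap]) (use DL_subset_dmap monoD[OF dmap_mono ksup_upper[OF S]] in blast)
  show "dmap k ?s \<subseteq> upjoin k (dmap k ` S)"
    unfolding upjoin_def cjoin_def
  proof (rule Inter_greatest, clarify)
    fix C assume C: "kcong k C" "\<Union>(insert DL (dmap k ` S)) \<subseteq> C"
    then have "(bot, a) \<in> C" if "a \<in> S" for a
      using that bot_partial_down_pp_self[of a] unfolding dmap_eq by auto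
    then have bot_s: "(bot, ?s) \<in> C" by (rule kcong_bot_ksup[OF C(1) S])
    have eqv: "equiv UNIV C" using kcong_equiv[OF C(1)] .
    have b_sup: "(b, sup b ?s) \<in> C" for b
      using kcong_sup[OF Cinfinite C(1) _ bot_s, of b b] eqv by (simp add: equiv_def refl_on_def)
    show "(b, c) \<in> C" if "(b, c) \<in> dmap k ?s" for b c
    proof -
      have "(sup b ?s, sup c ?s) \<in> C"
        using partial_down_pp_sup_DL that C(2) unfolding dmap_eq by blast
      then show ?thesis using b_sup[of b] b_sup[of c] eqv
        by (meson equiv_def symD transD)
    qed
  qed
qed

lemma cjoin_dmap_range:
  assumes F: "F \<noteq> {}" "F \<subseteq> range (dmap k :: 'a \<Rightarrow> 'a rel)" "|F| <o k"
  shows "cjoin k F \<in> range (dmap k)"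
proof -
  define A where "A = inv_into UNIV (dmap k) ` F"
  have A: "dmap k ` A = F" "|A| <o k"
    unfolding A_def by (rule image_inv_into_cancel[OF refl F(2)], rule card_of_image_ordLess[OF F(3)])
  obtain X where "X \<in> F" "DL \<subseteq> X" using F(1,2) DL_subset_dmap by blast
  then have "cjoin k F = upjoin k F" unfolding upjoin_def by (simp add: cjoin_insert_absorb)
  also have "\<dots> = dmap k (ksup A)" using dmap_ksup[OF A(2)] A(1) by simp
  finally show ?thesis by simp
qed

end

theorem mainTheorem19:
  fixes k :: "'k rel"
  assumes "Cinfinite k" and "regularCard k"
    and "kappa_frame k TYPE('a::{distrib_lattice,bounded_lattice})"
  shows "kcong k (DL :: 'a rel)
    \<and> (\<forall>a::'a. kcong k (dmap k a) \<and> DL \<subseteq> dmap k a)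
    \<and> (\<forall>a b::'a. dmap k (inf a b) = dmap k a \<inter> dmap k b)
    \<and> dmap k (top::'a) = UNIV
    \<and> (\<forall>S::'a set. |S| <o k \<longrightarrow> dmap k (ksup S) = upjoin k (dmap k ` S))
    \<and> {(a, b). dmap k a = dmap k b} = (DL :: 'a rel)
    \<and> mono (dmap k :: 'a \<Rightarrow> 'a rel)
    \<and> (\<forall>a b::'a. \<exists>c. dmap k a \<inter> dmap k b = dmap k c)
    \<and> (\<exists>c::'a. dmap k c = UNIV)
    \<and> (\<forall>F. F \<noteq> {} \<longrightarrow> F \<subseteq> range (dmap k :: 'a \<Rightarrow> 'a rel) \<longrightarrow> |F| <o k
          \<longrightarrow> cjoin k F \<in> range (dmap k))"
proof -
  interpret kappa_frame_ctx k "TYPE('a)" using assms(1,3) by unfold_locales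
  have "\<forall>a b::'a. \<exists>c. dmap k a \<inter> dmap k b = dmap k c"
    by (metis dmap_inf)
  then show ?thesis
    using kcong_DL kcong_dmap DL_subset_dmap dmap_inf dmap_top dmap_ksup dmap_kernel dmap_mono
      cjoin_dmap_range
    by (intro conjI) auto
qed

end
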